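(* Let $0\le\alpha\le\beta\le\pi/2$ and $P_1,P_2>0$, and define $\mathcal R(\theta)$ as in the context. If $|\alpha-\beta|\le\pi/4$, then $\bigcup_{\theta\in[\alpha,\beta]}\mathcal R(\theta)$ is convex; i.e. the first outer bound of the achievable rate region of a two-hop MAC with two relay nodes is convex.
   Context: Let $\mathcal C(x)=\frac12\log_2(1+x)$, $\phi_1(\theta)=P_1\cos^2(\theta-\alpha)$, $\phi_2(\theta)=P_2\cos^2(\theta-\beta)$, $\phi=\phi_1+\phi_2$, and $\mathcal R(\theta)=\{(R_1,R_2)\ge0:R_1\le\mathcal C(\phi_1(\theta)),R_2\le\mathcal C(\phi_2(\theta)),R_1+R_2\le\mathcal C(\phi(\theta))\}$. In a two-user two-hop MAC with two relays, with $\alpha,\beta,\theta$ the polar angles of the normalized source-to-relay channel vectors and of the amplification vector $\mathbf B\mathbf h_1$, and $P_i=\|\mathbf h_{0i}\|^2P_{S_i}$, the first outer bound (destination noise omitted) is the union of the sets $\mathcal R(\theta)$, $\theta\in[\alpha,\beta]$. *)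

theory Defs
  imports "HOL-Analysis.Analysis"
begin

definition capC :: "real \<Rightarrow> real" where
  "capC x = (1/2) * log 2 (1 + x)"

definition phi1 :: "real \<Rightarrow> real \<Rightarrow> real \<Rightarrow> real" where
  "phi1 P1 \<alpha> \<theta> = P1 * (cos (\<theta> - \<alpha>))\<^sup>2"

definition phi2 :: "real \<Rightarrow> real \<Rightarrow> real \<Rightarrow> real" where
  "phi2 P2 \<beta> \<theta> = P2 * (cos (\<theta> - \<beta>))\<^sup>2"

definition rate_region :: "real \<Rightarrow> real \<Rightarrow> real \<Rightarrow> real \<Rightarrow> real \<Rightarrow> (real \<times> real) set" where
  "rate_region P1 P2 \<alpha> \<beta> \<theta> =
     {(R1, R2). 0 \<le> R1 \<and> 0 \<le> R2 \<and>
        R1 \<le> capC (phi1 P1 \<alpha> \<theta>) \<and>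
        R2 \<le> capC (phi2 P2 \<beta> \<theta>) \<and>
        R1 + R2 \<le> capC (phi1 P1 \<alpha> \<theta> + phi2 P2 \<beta> \<theta>)}"

end

theory Submission
  imports Defs
begin

text \<open>
  The union is the set of nonnegative pairs lying below the three constraints
  for some admissible \<open>\<theta>\<close>. A convex combination of two such pairs, taken for
  angles \<open>a\<close> and \<open>b\<close>, is admissible for the same combination of \<open>a\<close> and \<open>b\<close>
  provided the three bounds \<open>\<theta> \<mapsto> C(\<phi>\<^sub>1(\<theta>))\<close>, \<open>C(\<phi>\<^sub>2(\<theta>))\<close>, \<open>C(\<phi>(\<theta>))\<close> are concave
  on \<open>[\<alpha>, \<beta>]\<close>. They are: \<open>C\<close> is concave and nondecreasing on \<open>[0, \<infinity>)\<close>, and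
  \<open>cos\<^sup>2(\<theta> - c) = (1 + cos (2(\<theta> - c)))/2\<close> is concave for \<open>|\<theta> - c| \<le> \<pi>/4\<close>, which
  covers \<open>c = \<alpha>\<close> and \<open>c = \<beta>\<close> because \<open>\<beta> - \<alpha> \<le> \<pi>/4\<close>.
\<close>

lemma concave_on_subset: "\<lbrakk>concave_on T f; S \<subseteq> T; convex S\<rbrakk> \<Longrightarrow> concave_on S f"
  unfolding concave_on_def by (rule convex_on_subset)

lemma concave_on_compose_mono:
  fixes f :: "'a::real_vector \<Rightarrow> real" and g :: "real \<Rightarrow> real"
  assumes f: "concave_on S f" and g: "concave_on T g" and "mono_on T g"
    and "convex T" and "f ` S \<subseteq> T"
  shows "concave_on S (\<lambda>x. g (f x))"
  unfolding concave_on_iff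
proof (intro conjI ballI allI impI)
  show "convex S" using f by (rule concave_on_imp_convex)
  fix x y and u v :: real
  assume xy: "x \<in> S" "y \<in> S" and uv: "0 \<le> u" "0 \<le> v" "u + v = 1"
  then have "u *\<^sub>R x + v *\<^sub>R y \<in> S"
    using \<open>convex S\<close> by (simp add: convex_def)
  have fxy: "f x \<in> T" "f y \<in> T" "f (u *\<^sub>R x + v *\<^sub>R y) \<in> T"
    using xy \<open>u *\<^sub>R x + v *\<^sub>R y \<in> S\<close> assms(5) by auto
  have "u * f x + v * f y \<in> T"
    using fxy \<open>convex T\<close> uv by (simp add: convex_def)
  have "u * g (f x) + v * g (f y) \<le> g (u * f x + v * f y)"
    using g fxy uv by (auto simp: concave_on_iff)
  also have "\<dots> \<le> g (f (u *\<^sub>R x + v *\<^sub>R y))"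
    using f xy uv fxy \<open>u * f x + v * f y \<in> T\<close>
    by (intro mono_onD[OF \<open>mono_on T g\<close>]) (auto simp: concave_on_iff)
  finally show "u * g (f x) + v * g (f y) \<le> g (f (u *\<^sub>R x + v *\<^sub>R y))" .
qed

lemma concave_on_cos_power2:
  fixes c :: real
  shows "concave_on {c - pi/4 .. c + pi/4} (\<lambda>x. (cos (x - c))\<^sup>2)"
proof (rule f''_le0_imp_concave[where f' = "\<lambda>x. - sin (2 * (x - c))"
      and f'' = "\<lambda>x. - 2 * cos (2 * (x - c))"])
  fix x
  have "((\<lambda>x. (cos (x - c))\<^sup>2) has_real_derivative 2 * cos (x - c) * (- sin (x - c) * 1)) (at x)"
    by (rule derivative_eq_intros | simp)+
  moreover have "2 * cos (x - c) * (- sin (x - c) * 1) = - sin (2 * (x - c))"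
    using sin_double[of "x - c"] by (simp add: algebra_simps)
  ultimately show "((\<lambda>x. (cos (x - c))\<^sup>2) has_real_derivative - sin (2 * (x - c))) (at x)"
    by simp
  show "((\<lambda>x. - sin (2 * (x - c))) has_real_derivative - 2 * cos (2 * (x - c))) (at x)"
    by (rule derivative_eq_intros | simp)+
  assume "x \<in> {c - pi/4 .. c + pi/4}"
  then have "0 \<le> cos (2 * (x - c))" by (intro cos_ge_zero) auto
  then show "- 2 * cos (2 * (x - c)) \<le> 0" by simp
qed simp

lemma mono_on_capC: "mono_on {0..} capC"
  by (rule mono_onI) (simp add: capC_def)

lemma concave_on_capC: "concave_on {0..} capC"
proof -
  have "concave_on {0..} (\<lambda>x. log 2 (1 + x))"
  proof (rule concave_on_compose_mono[OF _ log_concave])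
    show "concave_on {0..} ((+) (1::real))"
      by (simp add: concave_on_iff algebra_simps flip: distrib_right)
    show "mono_on {0<..} (log 2)"
      by (rule mono_onI) simp
  qed auto
  then show ?thesis
    unfolding capC_def by (rule concave_on_cmul[rotated]) simp
qed

lemma convex_Union_pentagons:
  fixes f1 f2 f3 :: "real \<Rightarrow> real"
  assumes "concave_on S f1" "concave_on S f2" "concave_on S f3"
  shows "convex (\<Union>\<theta>\<in>S. {(R1, R2). 0 \<le> R1 \<and> 0 \<le> R2 \<and>
            R1 \<le> f1 \<theta> \<and> R2 \<le> f2 \<theta> \<and> R1 + R2 \<le> f3 \<theta>})"
    (is "convex (\<Union>\<theta>\<in>S. ?R \<theta>)")
  unfolding convex_alt
proof (intro ballI allI impI)
  fix p q and u :: real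
  assume "p \<in> (\<Union>\<theta>\<in>S. ?R \<theta>)" "q \<in> (\<Union>\<theta>\<in>S. ?R \<theta>)" and u: "0 \<le> u \<and> u \<le> 1"
  then obtain a b x1 x2 y1 y2 where ab: "a \<in> S" "b \<in> S"
    and pq: "p = (x1, x2)" "q = (y1, y2)"
    and x: "0 \<le> x1" "0 \<le> x2" "x1 \<le> f1 a" "x2 \<le> f2 a" "x1 + x2 \<le> f3 a"
    and y: "0 \<le> y1" "0 \<le> y2" "y1 \<le> f1 b" "y2 \<le> f2 b" "y1 + y2 \<le> f3 b"
    by auto
  define \<theta> where "\<theta> = (1 - u) * a + u * b"
  have "\<theta> \<in> S"
    using ab u concave_on_imp_convex[OF assms(1)] by (simp add: \<theta>_def convex_alt)
  have mix: "(1 - u) * s + u * t \<le> f \<theta>"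
    if "concave_on S f" "s \<le> f a" "t \<le> f b" for f s t
  proof -
    have "(1 - u) * s + u * t \<le> (1 - u) * f a + u * f b"
      using that u by (intro add_mono mult_left_mono) auto
    also have "\<dots> \<le> f \<theta>"
      using concave_onD[OF that(1), of u a b] u ab by (simp add: \<theta>_def)
    finally show ?thesis .
  qed
  have "(1 - u) * x1 + u * y1 + ((1 - u) * x2 + u * y2) \<le> f3 \<theta>"
    using mix[OF assms(3) x(5) y(5)] by (simp add: distrib_left)
  moreover have "0 \<le> (1 - u) * x1 + u * y1" "0 \<le> (1 - u) * x2 + u * y2"
    using x y u by (intro add_nonneg_nonneg mult_nonneg_nonneg; simp)+
  ultimately have "(1 - u) *\<^sub>R p + u *\<^sub>R q \<in> ?R \<theta>"
    using mix[OF assms(1) x(3) y(3)] mix[OF assms(2) x(4) y(4)] by (simp add: pq)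
  with \<open>\<theta> \<in> S\<close> show "(1 - u) *\<^sub>R p + u *\<^sub>R q \<in> (\<Union>\<theta>\<in>S. ?R \<theta>)"
    by (rule UN_I)
qed

lemma concave_on_capC_compose:
  assumes "concave_on S f" "\<And>x. 0 \<le> f x"
  shows "concave_on S (\<lambda>x. capC (f x))"
  using assms by (intro concave_on_compose_mono[OF _ concave_on_capC mono_on_capC]) auto

theorem lemma4:
  fixes P1 P2 \<alpha> \<beta> :: real
  assumes "0 \<le> \<alpha>" "\<alpha> \<le> \<beta>" "\<beta> \<le> pi / 2"
    and "P1 > 0" "P2 > 0"
    and "\<bar>\<alpha> - \<beta>\<bar> \<le> pi / 4"
  shows "convex (\<Union>\<theta>\<in>{\<alpha>..\<beta>}. rate_region P1 P2 \<alpha> \<beta> \<theta>)"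
proof -
  have "concave_on {\<alpha>..\<beta>} (\<lambda>\<theta>. (cos (\<theta> - c))\<^sup>2)" if "c \<in> {\<alpha>, \<beta>}" for c
    using that assms(2,6)
    by (intro concave_on_subset[OF concave_on_cos_power2[of c]]) auto
  then have \<phi>1: "concave_on {\<alpha>..\<beta>} (phi1 P1 \<alpha>)"
    and \<phi>2: "concave_on {\<alpha>..\<beta>} (phi2 P2 \<beta>)"
    using assms(4,5) unfolding phi1_def phi2_def
    by (auto intro!: concave_on_cmul)
  have nonneg: "\<And>\<theta>. 0 \<le> phi1 P1 \<alpha> \<theta>" "\<And>\<theta>. 0 \<le> phi2 P2 \<beta> \<theta>"
    using assms(4,5) by (simp_all add: phi1_def phi2_def)
  have "concave_on {\<alpha>..\<beta>} (\<lambda>\<theta>. capC (phi1 P1 \<alpha> \<theta>))"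
    by (rule concave_on_capC_compose[OF \<phi>1 nonneg(1)])
  moreover have "concave_on {\<alpha>..\<beta>} (\<lambda>\<theta>. capC (phi2 P2 \<beta> \<theta>))"
    by (rule concave_on_capC_compose[OF \<phi>2 nonneg(2)])
  moreover have "concave_on {\<alpha>..\<beta>} (\<lambda>\<theta>. capC (phi1 P1 \<alpha> \<theta> + phi2 P2 \<beta> \<theta>))"
    by (rule concave_on_capC_compose[OF concave_on_add[OF \<phi>1 \<phi>2] add_nonneg_nonneg[OF nonneg]])
  ultimately show ?thesis
    unfolding rate_region_def by (rule convex_Union_pentagons)
qed

end
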